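(* If $\mathcal O\subseteq\mathbb F$ is regular, then there are finitely many $\approx_{\mathcal O}$-equivalence classes on $\mathbb F$, and each of these classes is a regular subset of $\mathbb F$.
   Context: Fix a type $\sigma$ (finite set of relation symbols with arities). $\mathrm{Inc}(\mathbf A)$ of a $\sigma$-structure $\mathbf A$ is the bipartite multigraph with parts $V(\mathbf A)$ and the blocks $(R,(x_1,\dots,x_r))$, $(x_1,\dots,x_r)\in R(\mathbf A)$, with one edge joining $x_i$ to the block for each $i$; $\mathbf A$ is a $\sigma$-forest if $\mathrm{Inc}(\mathbf A)$ has no cycles or parallel edges. $\mathbb F$ is the set of isomorphism classes of $\sigma$-forests, $\mathbb F_{\mathrm r}$ that of rooted $\sigma$-forests. $(\mathbf A,a)+(\mathbf B,b)$: disjoint union with $a,b$ identified as new root; $[(\mathbf A,a)]$ forgets the root. $\mathcal O\subseteq\mathbb F$ is regular if there are only finitely many distinct sets $\mathcal O-(\mathbf A,a)=\{(\mathbf B,b)\in\mathbb F_{\mathrm r}:[(\mathbf A,a)+(\mathbf B,b)]\in\mathcal O\}$. For unrooted forests, $\mathbf A+\mathbf B$ is disjoint union, $\mathcal O-\mathbf A=\{\mathbf B\in\mathbb F:\mathbf A+\mathbf B\in\mathcal O\}$, and $\mathbf A\approx_{\mathcal O}\mathbf A'$ iff $\mathcal O-\mathbf A=\mathcal O-\mathbf A'$. *)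

theory Defs
  imports Main
begin

text \<open>A sigma-structure over the fixed vertex universe nat. The type sigma is
  given by a finite type 'r of relation symbols together with an arity function
  ar :: 'r => nat. Tuples are lists.\<close>

record 'r struct =
  verts :: "nat set"
  rels  :: "'r \<Rightarrow> nat list set"

definition wf_struct :: "('r \<Rightarrow> nat) \<Rightarrow> 'r struct \<Rightarrow> bool" where
  "wf_struct ar A \<longleftrightarrow> finite (verts A) \<and>
     (\<forall>R. \<forall>t\<in>rels A R. length t = ar R \<and> set t \<subseteq> verts A)"

text \<open>Nodes of the incidence graph: vertices (Inl) and blocks (Inr (R, tuple)).\<close>

definition inc_adj :: "'r struct \<Rightarrow> (nat + ('r \<times> nat list)) \<Rightarrow> (nat + ('r \<times> nat list)) \<Rightarrow> bool" where
  "inc_adj A u w \<longleftrightarrow>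
     (\<exists>x R t. t \<in> rels A R \<and> x \<in> set t \<and>
        ((u = Inl x \<and> w = Inr (R, t)) \<or> (u = Inr (R, t) \<and> w = Inl x)))"

definition inc_has_cycle :: "'r struct \<Rightarrow> bool" where
  "inc_has_cycle A \<longleftrightarrow>
     (\<exists>cs. length cs \<ge> 3 \<and> distinct cs \<and>
        (\<forall>i. Suc i < length cs \<longrightarrow> inc_adj A (cs ! i) (cs ! Suc i)) \<and>
        inc_adj A (last cs) (hd cs))"

text \<open>Parallel edges in the incidence multigraph arise exactly from tuples with
  a repeated entry.\<close>

definition forest :: "('r \<Rightarrow> nat) \<Rightarrow> 'r struct \<Rightarrow> bool" where
  "forest ar A \<longleftrightarrow> wf_struct ar A \<and> (\<forall>R. \<forall>t\<in>rels A R. distinct t) \<and> \<not> inc_has_cycle A"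

definition rooted_forest :: "('r \<Rightarrow> nat) \<Rightarrow> 'r struct \<Rightarrow> nat \<Rightarrow> bool" where
  "rooted_forest ar A a \<longleftrightarrow> forest ar A \<and> a \<in> verts A"

definition struct_iso :: "'r struct \<Rightarrow> 'r struct \<Rightarrow> bool" where
  "struct_iso A B \<longleftrightarrow> (\<exists>f. bij_betw f (verts A) (verts B) \<and>
      (\<forall>R. rels B R = map f ` rels A R))"

definition dunion :: "'r struct \<Rightarrow> 'r struct \<Rightarrow> 'r struct" where
  "dunion A B = \<lparr> verts = (\<lambda>x. 2 * x) ` verts A \<union> (\<lambda>y. 2 * y + 1) ` verts B,
                  rels = (\<lambda>R. map (\<lambda>x. 2 * x) ` rels A R \<union> map (\<lambda>y. 2 * y + 1) ` rels B R) \<rparr>"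

text \<open>[(A,a) + (B,b)]: disjoint union with a and b identified (root forgotten).\<close>

definition glue :: "'r struct \<Rightarrow> nat \<Rightarrow> 'r struct \<Rightarrow> nat \<Rightarrow> 'r struct" where
  "glue A a B b = (let g = (\<lambda>y. if y = b then 2 * a else 2 * y + 1) in
     \<lparr> verts = (\<lambda>x. 2 * x) ` verts A \<union> g ` verts B,
       rels = (\<lambda>R. map (\<lambda>x. 2 * x) ` rels A R \<union> map g ` rels B R) \<rparr>)"

text \<open>A set of (iso classes of) sigma-forests, represented as an
  isomorphism-closed set of concrete forests.\<close>

definition forest_class_set :: "('r \<Rightarrow> nat) \<Rightarrow> 'r struct set \<Rightarrow> bool" where
  "forest_class_set ar Ob \<longleftrightarrow> (\<forall>A\<in>Ob. forest ar A) \<and>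
     (\<forall>A B. A \<in> Ob \<longrightarrow> wf_struct ar B \<longrightarrow> struct_iso A B \<longrightarrow> B \<in> Ob)"

definition rooted_residual :: "('r \<Rightarrow> nat) \<Rightarrow> 'r struct set \<Rightarrow> 'r struct \<Rightarrow> nat \<Rightarrow> ('r struct \<times> nat) set" where
  "rooted_residual ar Ob A a = {(B, b). rooted_forest ar B b \<and> glue A a B b \<in> Ob}"

definition regular :: "('r \<Rightarrow> nat) \<Rightarrow> 'r struct set \<Rightarrow> bool" where
  "regular ar Ob \<longleftrightarrow>
     finite ((\<lambda>(A, a). rooted_residual ar Ob A a) ` {(A, a). rooted_forest ar A a})"

definition residual :: "('r \<Rightarrow> nat) \<Rightarrow> 'r struct set \<Rightarrow> 'r struct \<Rightarrow> 'r struct set" where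
  "residual ar Ob A = {B. forest ar B \<and> dunion A B \<in> Ob}"

definition equiv_O :: "('r \<Rightarrow> nat) \<Rightarrow> 'r struct set \<Rightarrow> 'r struct \<Rightarrow> 'r struct \<Rightarrow> bool" where
  "equiv_O ar Ob A A' \<longleftrightarrow> residual ar Ob A = residual ar Ob A'"

definition equiv_O_class :: "('r \<Rightarrow> nat) \<Rightarrow> 'r struct set \<Rightarrow> 'r struct \<Rightarrow> 'r struct set" where
  "equiv_O_class ar Ob A = {A'. forest ar A' \<and> equiv_O ar Ob A A'}"

end

theory Submission
  imports Defs
begin

text \<open>Write \<open>A \<oplus>\<^sub>a B\<close> for B glued at its root to the vertex a of A. This is again a forest:
  the shared vertex separates the two sides, so a cycle of the glued structure stays on one
  side and is already a cycle there. Moreover \<open>(A \<oplus>\<^sub>a B) + D \<cong> (A + D) \<oplus>\<^sub>a B\<close>.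

  If a is a vertex of A, then \<open>O - A\<close> is determined by \<open>O - (A, a)\<close>: adding D disjointly
  is gluing D, enlarged by an isolated fresh root, at a. Since the signature is finite, there are
  only finitely many forests without vertices; so there are finitely many residuals, hence
  finitely many classes.

  For a class C with residual \<open>O - A\<^sub>0\<close>, a rooted forest (B, b) lies in \<open>C - (A, a)\<close> iff
  \<open>O - (A \<oplus>\<^sub>a B) = O - A\<^sub>0\<close>, and by the isomorphism above \<open>O - (A \<oplus>\<^sub>a B)\<close> consists of
  the D with \<open>(B, b) \<in> O - (A + D, a)\<close>. So membership of (B, b) only depends on which of the
  finitely many rooted residuals of O contain (B, b), which leaves finitely many possibilities
  for \<open>C - (A, a)\<close>.\<close>

section \<open>Cycles as cyclic lists\<close>

definition is_cycle :: "('a \<Rightarrow> 'a \<Rightarrow> bool) \<Rightarrow> 'a list \<Rightarrow> bool" where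
  "is_cycle adj cs \<longleftrightarrow> length cs \<ge> 3 \<and> distinct cs \<and>
     (\<forall>i < length cs. adj (cs ! i) (cs ! (Suc i mod length cs)))"

lemma is_cycle_Suc_mod_less: "is_cycle adj cs \<Longrightarrow> Suc i mod length cs < length cs"
  unfolding is_cycle_def by (intro mod_less_divisor) linarith

lemma is_cycle_consecutive:
  assumes "is_cycle adj cs" "Suc i < length cs"
  shows "adj (cs ! i) (cs ! Suc i)"
  using assms unfolding is_cycle_def by (metis Suc_lessD mod_less)

lemma inc_has_cycle_iff_is_cycle: "inc_has_cycle A \<longleftrightarrow> (\<exists>cs. is_cycle (inc_adj A) cs)"
proof
  assume "inc_has_cycle A"
  then obtain cs where len: "length cs \<ge> 3" "distinct cs"
    and step: "\<forall>i. Suc i < length cs \<longrightarrow> inc_adj A (cs ! i) (cs ! Suc i)"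
    and close: "inc_adj A (last cs) (hd cs)" unfolding inc_has_cycle_def by blast
  have "inc_adj A (cs ! i) (cs ! (Suc i mod length cs))" if i: "i < length cs" for i
  proof (cases "Suc i < length cs")
    case True then show ?thesis using step by simp
  next
    case False
    then have "Suc i = length cs" using i by simp
    then have "i = length cs - 1" "Suc i mod length cs = 0" by auto
    moreover have "cs \<noteq> []" using len by auto
    ultimately show ?thesis using close by (simp add: last_conv_nth hd_conv_nth)
  qed
  then show "\<exists>cs. is_cycle (inc_adj A) cs" using len unfolding is_cycle_def by blast
next
  assume "\<exists>cs. is_cycle (inc_adj A) cs"
  then obtain cs where cy: "is_cycle (inc_adj A) cs" by blast
  then have len: "length cs \<ge> 3" "distinct cs"
    and step: "\<forall>i < length cs. inc_adj A (cs ! i) (cs ! (Suc i mod length cs))"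
    unfolding is_cycle_def by auto
  have "Suc (length cs - 1) = length cs" using len by linarith
  then have "length cs - 1 < length cs" "Suc (length cs - 1) mod length cs = 0" by auto
  then have "inc_adj A (last cs) (hd cs)"
    using step len by (metis last_conv_nth hd_conv_nth list.size(3) not_numeral_le_zero)
  then show "inc_has_cycle A"
    using len is_cycle_consecutive[OF cy] unfolding inc_has_cycle_def by blast
qed

lemma is_cycle_rotate:
  assumes "is_cycle adj cs" shows "is_cycle adj (rotate k cs)"
proof -
  let ?n = "length cs"
  have len: "?n \<ge> 3" "distinct cs" and step: "\<forall>i < ?n. adj (cs ! i) (cs ! (Suc i mod ?n))"
    using assms unfolding is_cycle_def by auto
  have "adj (rotate k cs ! i) (rotate k cs ! (Suc i mod ?n))" if i: "i < ?n" for i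
  proof -
    have "rotate k cs ! i = cs ! ((k + i) mod ?n)" using i by (simp add: nth_rotate)
    moreover have "rotate k cs ! (Suc i mod ?n) = cs ! ((k + Suc i mod ?n) mod ?n)"
      using is_cycle_Suc_mod_less[OF assms] by (simp add: nth_rotate)
    moreover have "(k + Suc i mod ?n) mod ?n = Suc ((k + i) mod ?n) mod ?n"
      by (metis add_Suc_right mod_Suc_eq mod_add_right_eq)
    moreover have "(k + i) mod ?n < ?n" using i by (intro mod_less_divisor) linarith
    ultimately show ?thesis using step by metis
  qed
  then show ?thesis using len unfolding is_cycle_def by simp
qed

lemma is_cycle_map:
  assumes "is_cycle adj cs" "inj_on h (set cs)"
    and "\<And>x y. x \<in> set cs \<Longrightarrow> y \<in> set cs \<Longrightarrow> adj x y \<Longrightarrow> adj' (h x) (h y)"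
  shows "is_cycle adj' (map h cs)"
proof -
  have len: "length cs \<ge> 3" "distinct cs"
    and step: "\<forall>i < length cs. adj (cs ! i) (cs ! (Suc i mod length cs))"
    using assms(1) unfolding is_cycle_def by auto
  have "adj' (map h cs ! i) (map h cs ! (Suc i mod length cs))" if i: "i < length cs" for i
  proof -
    have "Suc i mod length cs < length cs" using assms(1) by (rule is_cycle_Suc_mod_less)
    then show ?thesis using assms(3) step i by (simp add: nth_mem)
  qed
  then show ?thesis using len assms(2) unfolding is_cycle_def by (simp add: distinct_map)
qed

lemma is_cycle_two_neighbours:
  assumes "is_cycle adj cs" "x \<in> set cs"
  obtains y z where "y \<in> set cs" "z \<in> set cs" "y \<noteq> z" "adj y x" "adj x z"
proof -
  let ?n = "length cs"
  have len: "?n \<ge> 3" "distinct cs" and step: "\<forall>i < ?n. adj (cs ! i) (cs ! (Suc i mod ?n))"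
    using assms unfolding is_cycle_def by auto
  obtain k where k: "k < ?n" "cs ! k = x" using assms(2) by (metis in_set_conv_nth)
  define j where "j = (if k = 0 then ?n - 1 else k - 1)"
  have j: "j < ?n" "Suc j mod ?n = k" using k len unfolding j_def by auto
  have "j \<noteq> Suc k mod ?n"
  proof (cases "Suc k < ?n")
    case True then show ?thesis using len unfolding j_def by auto
  next
    case False
    then have "Suc k = ?n" using k by linarith
    then show ?thesis using len unfolding j_def by auto
  qed
  moreover have next_k: "Suc k mod ?n < ?n" using assms(1) by (rule is_cycle_Suc_mod_less)
  ultimately have "cs ! j \<noteq> cs ! (Suc k mod ?n)" using j len by (simp add: nth_eq_iff_index_eq)
  then show ?thesis using that step j k next_k by (metis nth_mem)
qed

lemma eq_hd_if_consecutive_eq: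
  assumes "\<forall>i. Suc i < length xs \<longrightarrow> S (xs ! i) = S (xs ! Suc i)" "x \<in> set xs"
  shows "S x = S (hd xs)"
  using assms
proof (induction xs)
  case Nil then show ?case by simp
next
  case (Cons y ys)
  show ?case
  proof (cases "x = y")
    case True then show ?thesis by simp
  next
    case False
    then have x: "x \<in> set ys" using Cons.prems(2) by simp
    have "\<forall>i. Suc i < length ys \<longrightarrow> S (ys ! i) = S (ys ! Suc i)"
    proof (intro allI impI)
      fix i assume "Suc i < length ys"
      then show "S (ys ! i) = S (ys ! Suc i)" using Cons.prems(1)[rule_format, of "Suc i"] by simp
    qed
    then have "S x = S (hd ys)" using Cons.IH x by blast
    moreover have "S y = S (hd ys)"
    proof -
      have "ys \<noteq> []" using x by auto
      then show ?thesis using Cons.prems(1)[rule_format, of 0] by (simp add: hd_conv_nth)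
    qed
    ultimately show ?thesis by simp
  qed
qed

lemma is_cycle_path_avoiding:
  assumes cy: "is_cycle adj cs"
  obtains ds where "set ds \<subseteq> set cs" "set cs - {c} \<subseteq> set ds" "c \<notin> set ds"
    "\<And>i. Suc i < length ds \<Longrightarrow> adj (ds ! i) (ds ! Suc i)"
proof (cases "c \<in> set cs")
  case False
  have "adj (cs ! i) (cs ! Suc i)" if "Suc i < length cs" for i
    using is_cycle_consecutive[OF cy that] .
  then show ?thesis using False by (intro that[of cs]) auto
next
  case True
  then obtain k where k: "k < length cs" "cs ! k = c" by (metis in_set_conv_nth)
  have r: "is_cycle adj (rotate k cs)" using cy by (rule is_cycle_rotate)
  have "cs \<noteq> []" using k(1) by auto
  then have "hd (rotate k cs) = c" "rotate k cs \<noteq> []" using k by (simp_all add: hd_rotate_conv_nth)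
  then obtain rs where rs: "rotate k cs = c # rs" by (cases "rotate k cs") auto
  have "distinct (c # rs)" "set (c # rs) = set cs"
    using cy unfolding is_cycle_def by (simp_all flip: rs)
  moreover have "adj (rs ! i) (rs ! Suc i)" if "Suc i < length rs" for i
    using is_cycle_consecutive[OF r, of "Suc i"] that by (simp add: rs)
  ultimately show ?thesis by (intro that[of rs]) auto
qed

lemma is_cycle_constant_off_vertex:
  assumes cy: "is_cycle adj cs"
    and S: "\<And>x y. x \<in> set cs \<Longrightarrow> y \<in> set cs \<Longrightarrow> adj x y \<Longrightarrow> x \<noteq> c \<Longrightarrow> y \<noteq> c \<Longrightarrow> S x = S y"
  obtains s where "\<And>x. x \<in> set cs \<Longrightarrow> x \<noteq> c \<Longrightarrow> S x = s"
proof -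
  obtain ds where ds: "set ds \<subseteq> set cs" "set cs - {c} \<subseteq> set ds" "c \<notin> set ds"
    and path: "\<And>i. Suc i < length ds \<Longrightarrow> adj (ds ! i) (ds ! Suc i)"
    using is_cycle_path_avoiding[OF cy] by blast
  have consecutive: "\<forall>i. Suc i < length ds \<longrightarrow> S (ds ! i) = S (ds ! Suc i)"
  proof (intro allI impI)
    fix i assume i: "Suc i < length ds"
    then have "ds ! i \<in> set ds" "ds ! Suc i \<in> set ds" by simp_all
    then show "S (ds ! i) = S (ds ! Suc i)" using S path[OF i] ds(1,3) by blast
  qed
  have "S x = S (hd ds)" if "x \<in> set cs" "x \<noteq> c" for x
    using eq_hd_if_consecutive_eq[of ds S x, OF consecutive] ds(2) that by blast
  then show ?thesis using that by blast
qed

lemma inc_adj_sym: "inc_adj X x y \<longleftrightarrow> inc_adj X y x"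
  unfolding inc_adj_def by blast

lemma inc_adj_InlD: "inc_adj X (Inl v) z \<Longrightarrow> \<exists>R u. z = Inr (R, u) \<and> u \<in> rels X R \<and> v \<in> set u"
  unfolding inc_adj_def by blast

lemma inc_adj_InrD: "inc_adj X (Inr (R, u)) z \<Longrightarrow> u \<in> rels X R \<and> (\<exists>v. z = Inl v \<and> v \<in> set u)"
  unfolding inc_adj_def by blast

lemma is_cycle_inc_block:
  assumes "is_cycle (inc_adj X) cs" "Inr (R, u) \<in> set cs"
  shows "u \<in> rels X R"
proof -
  obtain z where "inc_adj X (Inr (R, u)) z" using is_cycle_two_neighbours[OF assms] .
  from inc_adj_InrD[OF this] show ?thesis by blast
qed

lemma is_cycle_inc_vertex:
  assumes "is_cycle (inc_adj X) cs" "Inl v \<in> set cs"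
  obtains R u where "u \<in> rels X R" "v \<in> set u"
proof -
  obtain z where "inc_adj X (Inl v) z" using is_cycle_two_neighbours[OF assms] .
  then show ?thesis using inc_adj_InlD that by blast
qed

lemma inc_has_cycle_if_cycle_in_image:
  fixes X Y :: "'r struct"
  assumes cy: "is_cycle (inc_adj X) cs" and f: "inj f"
    and img: "\<And>x. x \<in> set cs \<Longrightarrow> (\<exists>y. x = Inl (f y)) \<or> (\<exists>R t. t \<in> rels Y R \<and> x = Inr (R, map f t))"
  shows "inc_has_cycle Y"
proof -
  define H :: "nat + ('r \<times> nat list) \<Rightarrow> nat + ('r \<times> nat list)"
    where "H = case_sum (\<lambda>v. Inl (inv f v)) (\<lambda>(R, u). Inr (R, map (inv f) u))"
  have H_Inl: "H (Inl (f y)) = Inl y" for y using f by (simp add: H_def)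
  have H_Inr: "H (Inr (R, map f t)) = Inr (R, t)" for R t using f by (simp add: H_def comp_def)
  have inj: "inj_on H (set cs)"
  proof (rule inj_on_inverseI)
    fix x assume "x \<in> set cs"
    then show "case_sum (\<lambda>v. Inl (f v)) (\<lambda>(R, u). Inr (R, map f u)) (H x) = x"
      using img[OF \<open>x \<in> set cs\<close>] by (elim disjE exE conjE) (simp_all add: H_Inl H_Inr)
  qed
  have from_vertex: "inc_adj Y (H x) (H y)"
    if x: "x \<in> set cs" and y: "y \<in> set cs" and xy: "inc_adj X x y" and "x = Inl v" for x y v
  proof -
    obtain R u where u: "y = Inr (R, u)" "v \<in> set u" using inc_adj_InlD xy \<open>x = Inl v\<close> by blast
    obtain w where w: "x = Inl (f w)" using img[OF x] \<open>x = Inl v\<close> by blast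
    obtain t where t: "t \<in> rels Y R" "u = map f t" using img[OF y] u(1) by auto
    have "w \<in> set t" using u(2) t(2) w \<open>x = Inl v\<close> f by (auto simp: inj_image_mem_iff)
    then show ?thesis using w u t H_Inl H_Inr unfolding inc_adj_def by fastforce
  qed
  have adj: "inc_adj Y (H x) (H y)"
    if x: "x \<in> set cs" and y: "y \<in> set cs" and xy: "inc_adj X x y" for x y
  proof (cases x)
    case (Inl v) then show ?thesis using from_vertex x y xy by blast
  next
    case (Inr p)
    then obtain R u where "x = Inr (R, u)" by (cases p) auto
    then have "inc_adj X (Inr (R, u)) y" using xy by simp
    from inc_adj_InrD[OF this] obtain v where "y = Inl v" by blast
    then show ?thesis using from_vertex[of y x v] x y xy inc_adj_sym by blast
  qed
  have "is_cycle (inc_adj Y) (map H cs)" by (rule is_cycle_map[where adj' = "inc_adj Y", OF cy inj adj])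
  then show ?thesis using inc_has_cycle_iff_is_cycle by blast
qed

section \<open>Gluing forests at a vertex\<close>

definition glue_right :: "nat \<Rightarrow> nat \<Rightarrow> nat \<Rightarrow> nat" where
  "glue_right a b y = (if y = b then 2 * a else 2 * y + 1)"

lemma inj_glue_right: "inj (glue_right a b)"
proof (rule injI)
  fix x y assume "glue_right a b x = glue_right a b y"
  then show "x = y" unfolding glue_right_def by (cases "x = b"; cases "y = b") presburger+
qed

lemma inj_double: "inj (\<lambda>x::nat. 2 * x)"
  by (auto simp: inj_on_def)

lemma verts_glue: "verts (glue A a B b) = (\<lambda>x. 2 * x) ` verts A \<union> glue_right a b ` verts B"
  by (simp add: glue_def Let_def glue_right_def[abs_def])

lemma rels_glue:
  "rels (glue A a B b) R = map (\<lambda>x. 2 * x) ` rels A R \<union> map (glue_right a b) ` rels B R"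
  by (simp add: glue_def Let_def glue_right_def[abs_def])

lemma rels_glueE:
  assumes "u \<in> rels (glue A a B b) R"
  obtains (left) t where "t \<in> rels A R" "u = map (\<lambda>x. 2 * x) t"
    | (right) t where "t \<in> rels B R" "u = map (glue_right a b) t"
  using assms by (auto simp: rels_glue)

lemma glue_right_odd: "v \<in> set (map (glue_right a b) t) \<Longrightarrow> v \<noteq> 2 * a \<Longrightarrow> odd v"
  by (auto simp: glue_right_def)

lemma glue_block_parity:
  assumes "u \<in> rels (glue A a B b) R" "v \<in> set u" "v \<noteq> 2 * a"
  shows "odd v \<longleftrightarrow> (\<exists>w\<in>set u. odd w)"
  using assms(1)
proof (cases rule: rels_glueE)
  case (left t) then show ?thesis using assms(2) by auto
next
  case (right t) then show ?thesis using assms(2,3) glue_right_odd by blast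
qed

text \<open>Apart from the shared vertex \<open>2 * a\<close>, the vertices coming from A are even and those
  coming from B are odd.\<close>

definition odd_side :: "nat + ('r \<times> nat list) \<Rightarrow> bool" where
  "odd_side = case_sum odd (\<lambda>(R, u). \<exists>v\<in>set u. odd v)"

lemma glue_cycle_one_side:
  assumes "is_cycle (inc_adj (glue A a B b)) cs"
  obtains s where "\<And>x. x \<in> set cs \<Longrightarrow> x \<noteq> Inl (2 * a) \<Longrightarrow> odd_side x = s"
proof (rule is_cycle_constant_off_vertex[OF assms, where c = "Inl (2 * a)" and S = odd_side])
  fix x y assume adj: "inc_adj (glue A a B b) x y"
    and x: "x \<noteq> Inl (2 * a)" and y: "y \<noteq> Inl (2 * a)"
  then obtain v R u where u: "u \<in> rels (glue A a B b) R" "v \<in> set u"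
    and xy: "(x = Inl v \<and> y = Inr (R, u)) \<or> (x = Inr (R, u) \<and> y = Inl v)"
    unfolding inc_adj_def by blast
  then have "v \<noteq> 2 * a" using x y by auto
  then show "odd_side x = odd_side y"
    using glue_block_parity[OF u] xy by (auto simp: odd_side_def)
qed (use that in blast)

lemma glue_odd_side_cycle:
  assumes cy: "is_cycle (inc_adj (glue A a B b)) cs"
    and side: "\<And>x. x \<in> set cs \<Longrightarrow> x \<noteq> Inl (2 * a) \<Longrightarrow> odd_side x"
  shows "inc_has_cycle B"
proof (rule inc_has_cycle_if_cycle_in_image[OF cy inj_glue_right])
  fix x assume x: "x \<in> set cs"
  show "(\<exists>y. x = Inl (glue_right a b y)) \<or> (\<exists>R t. t \<in> rels B R \<and> x = Inr (R, map (glue_right a b) t))"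
  proof (cases x)
    case (Inl v)
    show ?thesis
    proof (cases "v = 2 * a")
      case True
      then have "x = Inl (glue_right a b b)" using Inl by (simp add: glue_right_def)
      then show ?thesis by blast
    next
      case False
      then have "odd v" using side[OF x] Inl by (simp add: odd_side_def)
      have "Inl v \<in> set cs" using x Inl by simp
      then obtain R u where u: "u \<in> rels (glue A a B b) R" "v \<in> set u"
        by (rule is_cycle_inc_vertex[OF cy])
      from u(1) show ?thesis
      proof (cases rule: rels_glueE)
        case (left t) then show ?thesis using u(2) \<open>odd v\<close> by auto
      next
        case (right t) then show ?thesis using u(2) Inl by auto
      qed
    qed
  next
    case (Inr p)
    then obtain R u where xe: "x = Inr (R, u)" by (cases p) auto
    then obtain w where w: "w \<in> set u" "odd w" using side[OF x] by (auto simp: odd_side_def)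
    have "u \<in> rels (glue A a B b) R" using is_cycle_inc_block[OF cy] x xe by simp
    then show ?thesis
    proof (cases rule: rels_glueE)
      case (left t) then show ?thesis using w by auto
    next
      case (right t) then show ?thesis using xe by blast
    qed
  qed
qed

lemma glue_even_side_cycle:
  assumes cy: "is_cycle (inc_adj (glue A a B b)) cs"
    and side: "\<And>x. x \<in> set cs \<Longrightarrow> x \<noteq> Inl (2 * a) \<Longrightarrow> \<not> odd_side x"
  shows "inc_has_cycle A"
proof (rule inc_has_cycle_if_cycle_in_image[OF cy inj_double])
  fix x assume x: "x \<in> set cs"
  show "(\<exists>y. x = Inl (2 * y)) \<or> (\<exists>R t. t \<in> rels A R \<and> x = Inr (R, map (\<lambda>x. 2 * x) t))"
  proof (cases x)
    case (Inl v)
    have "even v"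
    proof (cases "v = 2 * a")
      case False then show ?thesis using side[OF x] Inl by (simp add: odd_side_def)
    qed simp
    then have "x = Inl (2 * (v div 2))" using Inl by simp
    then show ?thesis by blast
  next
    case (Inr p)
    then obtain R u where xe: "x = Inr (R, u)" by (cases p) auto
    then have even: "\<forall>w\<in>set u. even w" using side[OF x] by (auto simp: odd_side_def)
    have "u \<in> rels (glue A a B b) R" using is_cycle_inc_block[OF cy] x xe by simp
    then show ?thesis
    proof (cases rule: rels_glueE)
      case (left t) then show ?thesis using xe by blast
    next
      case (right t)
      txt \<open>A block from B with only even entries consists of the shared vertex alone,
        but a block on a cycle has two distinct neighbours.\<close>
      then have all: "\<forall>w\<in>set u. w = 2 * a" using even glue_right_odd[of _ a b t] by blast
      obtain y z where yz: "y \<in> set cs" "z \<in> set cs" "y \<noteq> z"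
        "inc_adj (glue A a B b) y x" "inc_adj (glue A a B b) x z"
        by (rule is_cycle_two_neighbours[OF cy x])
      have "inc_adj (glue A a B b) (Inr (R, u)) y" "inc_adj (glue A a B b) (Inr (R, u)) z"
        using inc_adj_sym[THEN iffD1, OF yz(4)] yz(5) xe by simp_all
      from this[THEN inc_adj_InrD] obtain vy vz
        where "y = Inl vy" "vy \<in> set u" "z = Inl vz" "vz \<in> set u" by blast
      moreover from all this(2,4) have "vy = vz" by metis
      ultimately show ?thesis using yz(3) by simp
    qed
  qed
qed

lemma glue_no_cycle:
  assumes "\<not> inc_has_cycle A" "\<not> inc_has_cycle B"
  shows "\<not> inc_has_cycle (glue A a B b)"
proof
  assume "inc_has_cycle (glue A a B b)"
  then obtain cs where cy: "is_cycle (inc_adj (glue A a B b)) cs"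
    using inc_has_cycle_iff_is_cycle by blast
  obtain s where "\<And>x. x \<in> set cs \<Longrightarrow> x \<noteq> Inl (2 * a) \<Longrightarrow> odd_side x = s"
    using glue_cycle_one_side[OF cy] by blast
  then show False
    using glue_odd_side_cycle[OF cy] glue_even_side_cycle[OF cy] assms by (cases s) auto
qed

lemma wf_glue: "wf_struct ar A \<Longrightarrow> wf_struct ar B \<Longrightarrow> wf_struct ar (glue A a B b)"
  unfolding wf_struct_def verts_glue rels_glue by (auto, blast+)

lemma distinct_glue:
  "(\<forall>R. \<forall>t\<in>rels A R. distinct t) \<Longrightarrow> (\<forall>R. \<forall>t\<in>rels B R. distinct t) \<Longrightarrow>
   \<forall>R. \<forall>t\<in>rels (glue A a B b) R. distinct t"
  unfolding rels_glue using inj_glue_right[of a b] inj_double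
  by (auto simp: distinct_map intro!: inj_on_subset[OF _ subset_UNIV])

lemma forest_glue: "forest ar A \<Longrightarrow> forest ar B \<Longrightarrow> forest ar (glue A a B b)"
  unfolding forest_def using wf_glue distinct_glue glue_no_cycle by metis

section \<open>Disjoint unions and reassociation\<close>

lemma verts_dunion: "verts (dunion A B) = (\<lambda>x. 2 * x) ` verts A \<union> (\<lambda>y. 2 * y + 1) ` verts B"
  by (simp add: dunion_def)

lemma rels_dunion:
  "rels (dunion A B) R = map (\<lambda>x. 2 * x) ` rels A R \<union> map (\<lambda>y. 2 * y + 1) ` rels B R"
  by (simp add: dunion_def)

lemma wf_dunion: "wf_struct ar A \<Longrightarrow> wf_struct ar B \<Longrightarrow> wf_struct ar (dunion A B)"
  unfolding wf_struct_def verts_dunion rels_dunion by (auto, blast+)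

definition add_vertex :: "'r struct \<Rightarrow> nat \<Rightarrow> 'r struct" where
  "add_vertex B v = B\<lparr>verts := insert v (verts B)\<rparr>"

definition fresh_vertex :: "'r struct \<Rightarrow> nat" where
  "fresh_vertex B = (SOME v. v \<notin> verts B)"

lemma fresh_vertex_notin: "finite (verts B) \<Longrightarrow> fresh_vertex B \<notin> verts B"
  unfolding fresh_vertex_def by (rule someI_ex) (use ex_new_if_finite[OF infinite_UNIV_nat] in blast)

lemma forest_add_vertex: "forest ar B \<Longrightarrow> forest ar (add_vertex B v)"
proof -
  assume B: "forest ar B"
  have "inc_adj (add_vertex B v) = inc_adj B"
    by (intro ext) (simp add: inc_adj_def add_vertex_def)
  then have "inc_has_cycle (add_vertex B v) = inc_has_cycle B" by (simp add: inc_has_cycle_def)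
  moreover have "wf_struct ar (add_vertex B v)"
    using B unfolding forest_def wf_struct_def add_vertex_def by auto
  ultimately show ?thesis using B unfolding forest_def by (simp add: add_vertex_def)
qed

lemma glue_add_vertex:
  assumes "a \<in> verts A" "wf_struct ar B" "v \<notin> verts B"
  shows "glue A a (add_vertex B v) v = dunion A B"
proof -
  have right: "glue_right a v y = 2 * y + 1" if "y \<in> verts B" for y
    using that assms(3) by (auto simp: glue_right_def)
  have "verts (glue A a (add_vertex B v) v) = verts (dunion A B)"
  proof -
    have "glue_right a v ` verts B = (\<lambda>y. 2 * y + 1) ` verts B" using right by simp
    moreover have "glue_right a v v \<in> (\<lambda>x. 2 * x) ` verts A" using assms(1) by (simp add: glue_right_def)
    ultimately show ?thesis unfolding verts_glue verts_dunion add_vertex_def by auto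
  qed
  moreover have "rels (glue A a (add_vertex B v) v) R = rels (dunion A B) R" for R
  proof -
    have "map (glue_right a v) t = map (\<lambda>y. 2 * y + 1) t" if "t \<in> rels B R" for t
      using that assms(2) right unfolding wf_struct_def by (auto intro!: map_cong)
    then have "map (glue_right a v) ` rels B R = map (\<lambda>y. 2 * y + 1) ` rels B R"
      by (rule image_cong[OF refl])
    then show ?thesis unfolding rels_glue rels_dunion add_vertex_def by simp
  qed
  ultimately show ?thesis by (simp add: glue_def dunion_def Let_def fun_eq_iff)
qed

lemma forest_dunion:
  assumes "forest ar A" "a \<in> verts A" "forest ar D"
  shows "forest ar (dunion A D)"
proof -
  have "wf_struct ar D" "finite (verts D)" using assms(3) unfolding forest_def wf_struct_def by auto
  then have "glue A a (add_vertex D (fresh_vertex D)) (fresh_vertex D) = dunion A D"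
    using glue_add_vertex[OF assms(2)] fresh_vertex_notin by blast
  then show ?thesis using forest_glue[OF assms(1) forest_add_vertex[OF assms(3)]] by metis
qed

text \<open>In \<open>dunion (glue A a B b) D\<close> the vertices of A sit at 4x, those of B at 4y+2
  (the root b at 4a) and those of D at 2y+1; in \<open>glue (dunion A D) (2 * a) B b\<close> the
  positions 4y+2 and 2y+1 are exchanged.\<close>

definition reassoc :: "nat \<Rightarrow> nat" where
  "reassoc v = (if 4 dvd v then v else if even v then v div 2 else 2 * v)"

lemma reassoc_reassoc: "reassoc (reassoc v) = v"
proof -
  consider "4 dvd v" | "\<not> 4 dvd v" "even v" | "odd v" by blast
  then show ?thesis
  proof cases
    case 2
    then have "odd (v div 2)" "\<not> 4 dvd (v div 2)" by presburger+
    then show ?thesis using 2 by (simp add: reassoc_def)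
  next
    case 3
    then have "\<not> 4 dvd (2 * v)" by presburger
    then show ?thesis using 3 by (simp add: reassoc_def)
  qed (simp add: reassoc_def)
qed

lemma inj_reassoc: "inj reassoc"
  by (metis injI reassoc_reassoc)

lemma reassoc_simps:
  "reassoc (4 * x) = 4 * x"
  "reassoc (2 * glue_right a b y) = glue_right (2 * a) b y"
  "reassoc (Suc (2 * y)) = Suc (Suc (4 * y))"
  unfolding reassoc_def glue_right_def by presburger+

lemma struct_iso_reassoc:
  "struct_iso (dunion (glue A a B b) D) (glue (dunion A D) (2 * a) B b)"
proof -
  have "inj_on reassoc (verts (dunion (glue A a B b) D))"
    using inj_reassoc by (rule inj_on_subset) simp
  moreover have "verts (glue (dunion A D) (2 * a) B b) = reassoc ` verts (dunion (glue A a B b) D)"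
    unfolding verts_glue verts_dunion by (simp add: image_Un image_image reassoc_simps Un_ac)
  ultimately have "bij_betw reassoc (verts (dunion (glue A a B b) D)) (verts (glue (dunion A D) (2 * a) B b))"
    by (simp add: inj_on_imp_bij_betw)
  moreover have "rels (glue (dunion A D) (2 * a) B b) R = map reassoc ` rels (dunion (glue A a B b) D) R" for R
    unfolding rels_glue rels_dunion by (simp add: image_Un image_image comp_def reassoc_simps Un_ac)
  ultimately show ?thesis unfolding struct_iso_def by blast
qed

lemma struct_iso_sym:
  assumes "wf_struct ar X" "struct_iso X Y"
  shows "struct_iso Y X"
proof -
  obtain f where f: "bij_betw f (verts X) (verts Y)" and r: "\<And>R. rels Y R = map f ` rels X R"
    using assms(2) unfolding struct_iso_def by blast
  define g where "g = inv_into (verts X) f"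
  have "rels X R = map g ` rels Y R" for R
  proof -
    have "map g (map f t) = t" if "t \<in> rels X R" for t
    proof -
      have "set t \<subseteq> verts X" using assms(1) that unfolding wf_struct_def by blast
      then show ?thesis unfolding g_def using bij_betw_imp_inj_on[OF f] by (simp add: map_idI subset_iff)
    qed
    then show ?thesis by (simp add: r image_image)
  qed
  moreover have "bij_betw g (verts Y) (verts X)" unfolding g_def using f by (rule bij_betw_inv_into)
  ultimately show ?thesis unfolding struct_iso_def by blast
qed

lemma forest_class_set_iso_iff:
  assumes "forest_class_set ar Ob" "wf_struct ar X" "wf_struct ar Y" "struct_iso X Y"
  shows "X \<in> Ob \<longleftrightarrow> Y \<in> Ob"
  using assms struct_iso_sym[OF assms(2,4)] unfolding forest_class_set_def by blast

lemma dunion_glue_in_iff: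
  assumes "forest_class_set ar Ob" "wf_struct ar A" "wf_struct ar B" "wf_struct ar D"
  shows "dunion (glue A a B b) D \<in> Ob \<longleftrightarrow> glue (dunion A D) (2 * a) B b \<in> Ob"
  using assms by (intro forest_class_set_iso_iff struct_iso_reassoc wf_dunion wf_glue)

section \<open>Residuals\<close>

definition rooted_residuals :: "('r \<Rightarrow> nat) \<Rightarrow> 'r struct set \<Rightarrow> ('r struct \<times> nat) set set" where
  "rooted_residuals ar Ob = (\<lambda>(A, a). rooted_residual ar Ob A a) ` {(A, a). rooted_forest ar A a}"

lemma regular_iff_finite_rooted_residuals: "regular ar Ob \<longleftrightarrow> finite (rooted_residuals ar Ob)"
  unfolding regular_def rooted_residuals_def ..

lemma rooted_residual_in_rooted_residuals:
  "rooted_forest ar A a \<Longrightarrow> rooted_residual ar Ob A a \<in> rooted_residuals ar Ob"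
  unfolding rooted_residuals_def by blast

lemma residual_eq_rooted_residual:
  assumes "forest ar A" "a \<in> verts A"
  shows "residual ar Ob A =
    {B. forest ar B \<and> (add_vertex B (fresh_vertex B), fresh_vertex B) \<in> rooted_residual ar Ob A a}"
proof (rule set_eqI)
  fix B
  show "B \<in> residual ar Ob A \<longleftrightarrow>
    B \<in> {B. forest ar B \<and> (add_vertex B (fresh_vertex B), fresh_vertex B) \<in> rooted_residual ar Ob A a}"
  proof (cases "forest ar B")
    case True
    then have "wf_struct ar B" "fresh_vertex B \<notin> verts B"
      using fresh_vertex_notin unfolding forest_def wf_struct_def by auto
    then have "glue A a (add_vertex B (fresh_vertex B)) (fresh_vertex B) = dunion A B"
      using glue_add_vertex[OF assms(2)] by blast
    moreover have "rooted_forest ar (add_vertex B (fresh_vertex B)) (fresh_vertex B)"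
      using forest_add_vertex[OF True] unfolding rooted_forest_def add_vertex_def by simp
    ultimately show ?thesis unfolding residual_def rooted_residual_def using True by simp
  qed (simp add: residual_def)
qed

lemma finite_vertexless_structs: "finite {A :: 'r::finite struct. wf_struct ar A \<and> verts A = {}}"
proof (rule finite_subset)
  show "{A :: 'r struct. wf_struct ar A \<and> verts A = {}} \<subseteq>
      (\<lambda>P. \<lparr>verts = {}, rels = (\<lambda>R. if P R then {[]} else {})\<rparr>) ` UNIV"
  proof
    fix A :: "'r struct" assume "A \<in> {A. wf_struct ar A \<and> verts A = {}}"
    then have A: "wf_struct ar A" "verts A = {}" by auto
    then have "rels A R = (if [] \<in> rels A R then {[]} else {})" for R
      unfolding wf_struct_def by auto
    then have "A = \<lparr>verts = {}, rels = (\<lambda>R. if [] \<in> rels A R then {[]} else {})\<rparr>"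
      using A(2) by (cases A) (simp add: fun_eq_iff)
    then show "A \<in> (\<lambda>P. \<lparr>verts = {}, rels = (\<lambda>R. if P R then {[]} else {})\<rparr>) ` UNIV"
      by (rule image_eqI[where x = "\<lambda>R. [] \<in> rels A R"]) simp
  qed
qed simp

lemma finite_residuals:
  fixes Ob :: "'r::finite struct set"
  assumes "regular ar Ob"
  shows "finite (residual ar Ob ` {A. forest ar A})"
proof (rule finite_subset)
  let ?res_of = "\<lambda>S. {B. forest ar B \<and> (add_vertex B (fresh_vertex B), fresh_vertex B) \<in> S}"
  let ?E = "{A :: 'r struct. wf_struct ar A \<and> verts A = {}}"
  show "residual ar Ob ` {A. forest ar A} \<subseteq> ?res_of ` rooted_residuals ar Ob \<union> residual ar Ob ` ?E"
  proof
    fix X assume "X \<in> residual ar Ob ` {A. forest ar A}"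
    then obtain A where A: "forest ar A" "X = residual ar Ob A" by blast
    show "X \<in> ?res_of ` rooted_residuals ar Ob \<union> residual ar Ob ` ?E"
    proof (cases "verts A = {}")
      case True
      then have "A \<in> ?E" using A(1) unfolding forest_def by blast
      then show ?thesis using A(2) by blast
    next
      case False
      then obtain a where a: "a \<in> verts A" by blast
      then have "X = ?res_of (rooted_residual ar Ob A a)"
        using residual_eq_rooted_residual[OF A(1) a] A(2) by simp
      moreover have "rooted_residual ar Ob A a \<in> rooted_residuals ar Ob"
        using A(1) a by (simp add: rooted_residual_in_rooted_residuals rooted_forest_def)
      ultimately show ?thesis by blast
    qed
  qed
  show "finite (?res_of ` rooted_residuals ar Ob \<union> residual ar Ob ` ?E)"
    using assms finite_vertexless_structs
    by (intro finite_UnI finite_imageI) (simp_all add: regular_iff_finite_rooted_residuals)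
qed

lemma finite_equiv_O_classes:
  fixes Ob :: "'r::finite struct set"
  assumes "regular ar Ob"
  shows "finite (equiv_O_class ar Ob ` {A. forest ar A})"
proof -
  have "equiv_O_class ar Ob A = (\<lambda>S. {A'. forest ar A' \<and> S = residual ar Ob A'}) (residual ar Ob A)"
    for A unfolding equiv_O_class_def equiv_O_def by simp
  then have "equiv_O_class ar Ob ` {A. forest ar A} =
      (\<lambda>S. {A'. forest ar A' \<and> S = residual ar Ob A'}) ` residual ar Ob ` {A. forest ar A}"
    by (simp add: image_image)
  then show ?thesis using finite_residuals[OF assms] by simp
qed

lemma residual_glue:
  assumes Ob: "forest_class_set ar Ob" and A: "forest ar A" and B: "rooted_forest ar B b"
  shows "residual ar Ob (glue A a B b) =
    {D. forest ar D \<and> (B, b) \<in> rooted_residual ar Ob (dunion A D) (2 * a)}"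
proof (rule set_eqI)
  fix D
  show "D \<in> residual ar Ob (glue A a B b) \<longleftrightarrow>
    D \<in> {D. forest ar D \<and> (B, b) \<in> rooted_residual ar Ob (dunion A D) (2 * a)}"
  proof (cases "forest ar D")
    case True
    then have "dunion (glue A a B b) D \<in> Ob \<longleftrightarrow> glue (dunion A D) (2 * a) B b \<in> Ob"
      using dunion_glue_in_iff[OF Ob] A B unfolding rooted_forest_def forest_def by blast
    then show ?thesis unfolding residual_def rooted_residual_def using True B by simp
  qed (simp add: residual_def)
qed

lemma rooted_residual_equiv_O_class:
  assumes Ob: "forest_class_set ar Ob" and A: "rooted_forest ar A a"
  obtains U where "U \<subseteq> Pow (rooted_residuals ar Ob)"
    "rooted_residual ar (equiv_O_class ar Ob A0) A a =
      {(B, b). rooted_forest ar B b \<and> {X \<in> rooted_residuals ar Ob. (B, b) \<in> X} \<in> U}"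
proof -
  let ?RR = "rooted_residuals ar Ob"
  let ?Q = "\<lambda>D. rooted_residual ar Ob (dunion A D) (2 * a)"
  have Q: "?Q D \<in> ?RR" if "forest ar D" for D
  proof (rule rooted_residual_in_rooted_residuals)
    show "rooted_forest ar (dunion A D) (2 * a)"
      using A forest_dunion[OF _ _ that] unfolding rooted_forest_def verts_dunion by blast
  qed
  have fA: "forest ar A" using A unfolding rooted_forest_def by blast
  define U where "U = {V. V \<subseteq> ?RR \<and> residual ar Ob A0 = {D. forest ar D \<and> ?Q D \<in> V}}"
  have key: "(B, b) \<in> rooted_residual ar (equiv_O_class ar Ob A0) A a \<longleftrightarrow>
      {X \<in> ?RR. (B, b) \<in> X} \<in> U" if B: "rooted_forest ar B b" for B b
  proof -
    define T where "T = {X \<in> ?RR. (B, b) \<in> X}"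
    have "forest ar (glue A a B b)"
      using fA B forest_glue unfolding rooted_forest_def by blast
    then have "(B, b) \<in> rooted_residual ar (equiv_O_class ar Ob A0) A a \<longleftrightarrow>
        residual ar Ob A0 = residual ar Ob (glue A a B b)"
      using B unfolding rooted_residual_def equiv_O_class_def equiv_O_def by simp
    moreover have "residual ar Ob (glue A a B b) = {D. forest ar D \<and> ?Q D \<in> T}"
      using residual_glue[OF Ob fA B] Q unfolding T_def by blast
    moreover have "T \<in> U \<longleftrightarrow> residual ar Ob A0 = {D. forest ar D \<and> ?Q D \<in> T}"
      unfolding U_def T_def by simp
    ultimately show ?thesis unfolding T_def by simp
  qed
  have "rooted_residual ar (equiv_O_class ar Ob A0) A a =
      {(B, b). rooted_forest ar B b \<and> {X \<in> ?RR. (B, b) \<in> X} \<in> U}"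
  proof (rule set_eqI, clarify)
    fix B b
    show "(B, b) \<in> rooted_residual ar (equiv_O_class ar Ob A0) A a \<longleftrightarrow>
      (B, b) \<in> {(B, b). rooted_forest ar B b \<and> {X \<in> ?RR. (B, b) \<in> X} \<in> U}"
    proof (cases "rooted_forest ar B b")
      case True then show ?thesis using key by simp
    qed (simp add: rooted_residual_def)
  qed
  moreover have "U \<subseteq> Pow ?RR" unfolding U_def by blast
  ultimately show ?thesis using that by blast
qed

lemma regular_equiv_O_class:
  assumes "forest_class_set ar Ob" "regular ar Ob"
  shows "regular ar (equiv_O_class ar Ob A0)"
proof -
  let ?RR = "rooted_residuals ar Ob"
  let ?shape = "\<lambda>U. {(B, b). rooted_forest ar B b \<and> {X \<in> ?RR. (B, b) \<in> X} \<in> U}"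
  have "rooted_residuals ar (equiv_O_class ar Ob A0) \<subseteq> ?shape ` Pow (Pow ?RR)"
  proof
    fix S assume "S \<in> rooted_residuals ar (equiv_O_class ar Ob A0)"
    then obtain A a where A: "rooted_forest ar A a"
      and S: "S = rooted_residual ar (equiv_O_class ar Ob A0) A a"
      unfolding rooted_residuals_def by blast
    obtain U where "U \<subseteq> Pow ?RR" "rooted_residual ar (equiv_O_class ar Ob A0) A a = ?shape U"
      by (rule rooted_residual_equiv_O_class[OF assms(1) A])
    then show "S \<in> ?shape ` Pow (Pow ?RR)" using S by blast
  qed
  moreover have "finite (?shape ` Pow (Pow ?RR))"
    using assms(2) by (simp add: regular_iff_finite_rooted_residuals)
  ultimately show ?thesis
    unfolding regular_iff_finite_rooted_residuals by (rule finite_subset)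
qed

theorem lemma4p4:
  fixes ar :: "'r::finite \<Rightarrow> nat" and Ob :: "'r struct set"
  assumes "forest_class_set ar Ob"
    and "regular ar Ob"
  shows "finite (equiv_O_class ar Ob ` {A. forest ar A}) \<and>
         (\<forall>A. forest ar A \<longrightarrow> regular ar (equiv_O_class ar Ob A))"
  using finite_equiv_O_classes[OF assms(2)] regular_equiv_O_class[OF assms] by blast

end
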